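(* Let $\mathcal{H}$ be a complex Hilbert space with $\dim\mathcal{H}>1$. Then the Stone spectrum $\mathcal{Q}(\mathbb{L}(\mathcal{H}))$ is not compact, and if $\dim\mathcal{H}$ is infinite then $\mathcal{Q}(\mathbb{L}(\mathcal{H}))$ is not locally compact.
   Context: $\mathbb{L}(\mathcal{H})$ is the lattice of closed subspaces of $\mathcal{H}$ with $U\wedge V=U\cap V$, $U\vee V=\overline{U+V}$. A quasipoint in a lattice $\mathbb{L}$ with least element $0$ is a maximal (w.r.t. inclusion) subset $\mathfrak{B}\subseteq\mathbb{L}$ such that $\mathfrak{B}\neq\emptyset$, $0\notin\mathfrak{B}$, and for all $a,b\in\mathfrak{B}$ there is $c\in\mathfrak{B}$ with $c\le a\wedge b$. $\mathcal{Q}(\mathbb{L})$ denotes the set of quasipoints; for $a\in\mathbb{L}$ put $\mathcal{Q}_a(\mathbb{L})=\{\mathfrak{B}\in\mathcal{Q}(\mathbb{L}) : a\in\mathfrak{B}\}$. The Stone spectrum is $\mathcal{Q}(\mathbb{L})$ with the topology having the sets $\mathcal{Q}_a(\mathbb{L})$ as a basis. *)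

theory Defs
  imports "HOL-Analysis.Analysis"
begin

text \<open>HOL-Analysis only provides real inner product spaces. A complex inner
product space is modelled as a real inner product space equipped with a complex
scalar multiplication extending the real one and a complex (sesquilinear,
Hermitian) inner product whose real part is the real inner product.  The norm,
metric and topology are therefore those induced by the complex inner product.\<close>

class complex_inner = real_inner +
  fixes scaleC :: "complex \<Rightarrow> 'a \<Rightarrow> 'a" (infixr \<open>*\<^sub>C\<close> 75)
    and cinner :: "'a \<Rightarrow> 'a \<Rightarrow> complex"
  assumes scaleC_add_right: "a *\<^sub>C (x + y) = a *\<^sub>C x + a *\<^sub>C y"
    and scaleC_add_left: "(a + b) *\<^sub>C x = a *\<^sub>C x + b *\<^sub>C x"
    and scaleC_scaleC: "a *\<^sub>C (b *\<^sub>C x) = (a * b) *\<^sub>C x"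
    and scaleC_one: "1 *\<^sub>C x = x"
    and scaleC_of_real: "complex_of_real r *\<^sub>C x = r *\<^sub>R x"
    and cinner_commute: "cinner x y = cnj (cinner y x)"
    and cinner_add_right: "cinner x (y + z) = cinner x y + cinner x z"
    and cinner_scaleC_right: "cinner x (a *\<^sub>C y) = a * cinner x y"
    and inner_Re_cinner: "inner x y = Re (cinner x y)"

class chilbert_space = complex_inner + complete_space

definition csubspace :: "'a::complex_inner set \<Rightarrow> bool" where
  "csubspace S \<longleftrightarrow> 0 \<in> S \<and> (\<forall>x\<in>S. \<forall>y\<in>S. x + y \<in> S) \<and> (\<forall>c. \<forall>x\<in>S. c *\<^sub>C x \<in> S)"

definition cspan :: "'a::complex_inner set \<Rightarrow> 'a set" where
  "cspan S = {(\<Sum>v\<in>T. u v *\<^sub>C v) | T u. finite T \<and> T \<subseteq> S}"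

text \<open>Complex dimension: dim H <= 1 iff H is spanned by a single vector;
H is finite dimensional iff it is spanned by a finite set.\<close>
definition cdim_gt_one :: "'a::complex_inner itself \<Rightarrow> bool" where
  "cdim_gt_one _ \<longleftrightarrow> \<not> (\<exists>x::'a. cspan {x} = UNIV)"

definition cinfinite_dim :: "'a::complex_inner itself \<Rightarrow> bool" where
  "cinfinite_dim _ \<longleftrightarrow> \<not> (\<exists>F::'a set. finite F \<and> cspan F = UNIV)"

text \<open>L(H): closed complex subspaces, ordered by inclusion, meet = intersection,
least element the zero subspace.\<close>
definition closed_subspaces :: "'a::complex_inner set set" where
  "closed_subspaces = {S. csubspace S \<and> closed S}"

definition is_quasipoint_pre ::
  "'b set \<Rightarrow> ('b \<Rightarrow> 'b \<Rightarrow> bool) \<Rightarrow> ('b \<Rightarrow> 'b \<Rightarrow> 'b) \<Rightarrow> 'b \<Rightarrow> 'b set \<Rightarrow> bool" where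
  "is_quasipoint_pre L le meet zero B \<longleftrightarrow>
     B \<subseteq> L \<and> B \<noteq> {} \<and> zero \<notin> B \<and>
     (\<forall>a\<in>B. \<forall>b\<in>B. \<exists>c\<in>B. le c (meet a b))"

definition quasipoints ::
  "'b set \<Rightarrow> ('b \<Rightarrow> 'b \<Rightarrow> bool) \<Rightarrow> ('b \<Rightarrow> 'b \<Rightarrow> 'b) \<Rightarrow> 'b \<Rightarrow> 'b set set" where
  "quasipoints L le meet zero =
     {B. is_quasipoint_pre L le meet zero B \<and>
         (\<forall>B'. is_quasipoint_pre L le meet zero B' \<and> B \<subseteq> B' \<longrightarrow> B' = B)}"

definition stone_spectrum ::
  "'b set \<Rightarrow> ('b \<Rightarrow> 'b \<Rightarrow> bool) \<Rightarrow> ('b \<Rightarrow> 'b \<Rightarrow> 'b) \<Rightarrow> 'b \<Rightarrow> 'b set topology" where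
  "stone_spectrum L le meet zero =
     topology_generated_by
       ((\<lambda>a. {B \<in> quasipoints L le meet zero. a \<in> B}) ` L)"

definition stone_spectrum_LH :: "'a::complex_inner itself \<Rightarrow> 'a set set topology" where
  "stone_spectrum_LH _ =
     stone_spectrum (closed_subspaces :: 'a set set) (\<subseteq>) (\<inter>) {0}"

end

theory Submission
  imports Defs
begin

text \<open>
  A nonzero vector \<open>x\<close> determines the principal quasipoint of all closed subspaces containing
  the ray \<open>\<complex>x\<close>. Let a closed subspace \<open>a\<close> contain linearly independent vectors
  \<open>x\<close> and \<open>y\<close>. The principal quasipoints of the vectors \<open>x + n y\<close>, \<open>n \<in> \<nat>\<close>, all lie
  in \<open>Q\<^sub>a\<close>. The basic open sets \<open>Q\<^sub>b\<close> with \<open>b\<close> not containing both \<open>x\<close> and \<open>y\<close> cover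
  the spectrum (a quasipoint all of whose members contain \<open>x\<close> would contain \<open>\<complex>x\<close>, which
  does not contain \<open>y\<close>), and each of them contains at most one of these principal quasipoints,
  because a subspace containing two points of the line \<open>x + \<real>y\<close> contains \<open>x\<close> and \<open>y\<close>.
  Hence no compact set contains \<open>Q\<^sub>a\<close>, and \<open>a = H\<close> shows that the spectrum is not compact.
  If \<open>H\<close> is infinite dimensional, the orthogonal complements of finite sets extend to a
  quasipoint none of whose members lies in a ray; so each of its basic neighbourhoods is a
  \<open>Q\<^sub>a\<close> of the above kind and it has no compact neighbourhood.
\<close>

section \<open>Complex inner products and spans\<close>

lemma scaleC_zero_left [simp]: "(0::complex) *\<^sub>C (x::'a::complex_inner) = 0"
  using scaleC_of_real[of 0 x] by simp

lemma scaleC_zero_right [simp]: "a *\<^sub>C (0::'a::complex_inner) = 0"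
  using scaleC_add_right[of a "0::'a" 0] by simp

lemma scaleC_minus_one [simp]: "(-1) *\<^sub>C (x::'a::complex_inner) = - x"
  using scaleC_of_real[of "-1" x] by simp

lemma scaleC_sum_right: "a *\<^sub>C (\<Sum>i\<in>T. f i) = (\<Sum>i\<in>T. a *\<^sub>C (f i::'a::complex_inner))"
  by (induction T rule: infinite_finite_induct) (auto simp: scaleC_add_right)

lemma cinner_zero_right [simp]: "cinner (x::'a::complex_inner) 0 = 0"
  using cinner_add_right[of x 0 0] by simp

lemma cinner_zero_left [simp]: "cinner 0 (x::'a::complex_inner) = 0"
  using cinner_commute[of 0 x] by simp

lemma cinner_eq_zero_sym: "cinner (x::'a::complex_inner) y = 0 \<longleftrightarrow> cinner y x = 0"
  by (metis cinner_commute complex_cnj_zero_iff)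

lemma cinner_add_left: "cinner ((x::'a::complex_inner) + y) z = cinner x z + cinner y z"
  by (metis cinner_add_right cinner_commute complex_cnj_add)

lemma cinner_scaleC_left: "cinner (a *\<^sub>C (x::'a::complex_inner)) y = cnj a * cinner x y"
  by (metis cinner_scaleC_right cinner_commute complex_cnj_mult)

lemma cinner_diff_right: "cinner (x::'a::complex_inner) (y - z) = cinner x y - cinner x z"
  using cinner_add_right[of x "y - z" z] by (simp add: algebra_simps)

lemma cinner_sum_right: "cinner (x::'a::complex_inner) (\<Sum>i\<in>T. f i) = (\<Sum>i\<in>T. cinner x (f i))"
  by (induction T rule: infinite_finite_induct) (auto simp: cinner_add_right)

lemma cinner_self_eq_zero [simp]: "cinner (z::'a::complex_inner) z = 0 \<longleftrightarrow> z = 0"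
  by (metis cinner_zero_left inner_Re_cinner inner_eq_zero_iff zero_complex.sel(1))

lemma cinner_eq_zero_iff_inner:
  "cinner (f::'a::complex_inner) v = 0 \<longleftrightarrow> inner f v = 0 \<and> inner (\<i> *\<^sub>C f) v = 0"
proof -
  have "inner (\<i> *\<^sub>C f) v = Im (cinner f v)"
    by (simp add: inner_Re_cinner cinner_scaleC_left)
  then show ?thesis by (simp add: inner_Re_cinner complex_eq_iff)
qed

lemma cspan_finite:
  assumes "finite F"
  shows "cspan (F::'a::complex_inner set) = {\<Sum>v\<in>F. u v *\<^sub>C v | u. True}"
proof (intro set_eqI iffI)
  fix x assume "x \<in> cspan F"
  then obtain T u where x: "x = (\<Sum>w\<in>T. u w *\<^sub>C w)" "T \<subseteq> F" unfolding cspan_def by blast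
  define u' where "u' w = (if w \<in> T then u w else 0)" for w
  have "(\<Sum>w\<in>F. u' w *\<^sub>C w) = (\<Sum>w\<in>F \<inter> T. u w *\<^sub>C w)"
    unfolding sum.inter_restrict[OF assms] by (rule sum.cong) (auto simp: u'_def)
  also have "F \<inter> T = T" using x by blast
  finally have "x = (\<Sum>w\<in>F. u' w *\<^sub>C w)" using x by simp
  then show "x \<in> {\<Sum>v\<in>F. u v *\<^sub>C v | u. True}" by blast
next
  fix x assume "x \<in> {\<Sum>v\<in>F. u v *\<^sub>C v | u. True}"
  then show "x \<in> cspan F" unfolding cspan_def using assms by blast
qed

lemma cspan_singleton: "cspan {z::'a::complex_inner} = range (\<lambda>c. c *\<^sub>C z)"
proof -
  have "cspan {z} = {u z *\<^sub>C z | u. True}" by (simp add: cspan_finite)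
  also have "\<dots> = range (\<lambda>c. c *\<^sub>C z)"
    by (auto intro: exI[of _ "\<lambda>_. c" for c])
  finally show ?thesis .
qed

lemma cspan_superset: "f \<in> F \<Longrightarrow> f \<in> cspan (F::'a::complex_inner set)"
  unfolding cspan_def by (rule CollectI, rule exI[of _ "{f}"], rule exI[of _ "\<lambda>_. 1"]) (simp add: scaleC_one)

lemma cspan_mono: "G \<subseteq> F \<Longrightarrow> cspan G \<subseteq> cspan (F::'a::complex_inner set)"
  unfolding cspan_def by blast

lemma cspan_add:
  assumes "finite F" "x \<in> cspan F" "y \<in> cspan F"
  shows "x + y \<in> cspan (F::'a::complex_inner set)"
proof -
  obtain u1 u2 where "x = (\<Sum>v\<in>F. u1 v *\<^sub>C v)" "y = (\<Sum>v\<in>F. u2 v *\<^sub>C v)"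
    using assms by (auto simp: cspan_finite)
  then have "x + y = (\<Sum>v\<in>F. (u1 v + u2 v) *\<^sub>C v)"
    by (simp add: scaleC_add_left sum.distrib)
  then show ?thesis using assms(1) by (auto simp: cspan_finite)
qed

lemma cspan_scaleC:
  assumes "finite F" "x \<in> cspan F"
  shows "c *\<^sub>C x \<in> cspan (F::'a::complex_inner set)"
proof -
  obtain u where "x = (\<Sum>v\<in>F. u v *\<^sub>C v)"
    using assms by (auto simp: cspan_finite)
  then have "c *\<^sub>C x = (\<Sum>v\<in>F. (c * u v) *\<^sub>C v)"
    by (simp add: scaleC_sum_right scaleC_scaleC)
  then show ?thesis using assms(1) by (auto simp: cspan_finite)
qed

lemma cspan_diff:
  assumes "finite F" "x \<in> cspan F" "y \<in> cspan F"
  shows "x - y \<in> cspan (F::'a::complex_inner set)"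
  using cspan_add[OF assms(1,2) cspan_scaleC[OF assms(1,3), of "-1"]] by simp

section \<open>Orthogonal complements and closed subspaces\<close>

definition orth :: "'a::complex_inner set \<Rightarrow> 'a set" where
  "orth F = {v. \<forall>f\<in>F. cinner f v = 0}"

lemma orth_zero [simp]: "orth {0::'a::complex_inner} = UNIV"
  by (simp add: orth_def)

lemma cinner_cspan_orth:
  assumes "s \<in> cspan G" "w \<in> orth G"
  shows "cinner w (s::'a::complex_inner) = 0"
proof -
  obtain T u where s: "s = (\<Sum>v\<in>T. u v *\<^sub>C v)" "T \<subseteq> G"
    using assms(1) unfolding cspan_def by blast
  have "cinner w v = 0" if "v \<in> T" for v
    using that assms(2) s(2) cinner_eq_zero_sym by (auto simp: orth_def)
  then show ?thesis unfolding s by (simp add: cinner_sum_right cinner_scaleC_right)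
qed

text \<open>Gram--Schmidt: the component of the new vector orthogonal to the old span is added.\<close>
lemma cspan_orth_decomposition:
  assumes "finite F"
  shows "\<exists>s\<in>cspan F. (v::'a::complex_inner) - s \<in> orth F"
  using assms
proof (induction F arbitrary: v rule: finite_induct)
  case empty
  have "0 \<in> cspan ({}::'a set)" unfolding cspan_def by force
  then show ?case by (auto simp: orth_def)
next
  case (insert f G)
  obtain sf where sf: "sf \<in> cspan G" "f - sf \<in> orth G" using insert.IH by blast
  obtain s where s: "s \<in> cspan G" "v - s \<in> orth G" using insert.IH by blast
  define g where "g = f - sf"
  define w where "w = v - s"
  define k where "k = cinner g w / cinner g g"
  have fin: "finite (insert f G)" using insert by simp
  have sub: "cspan G \<subseteq> cspan (insert f G)" by (rule cspan_mono) blast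
  have "f \<in> cspan (insert f G)" by (rule cspan_superset) simp
  then have "g \<in> cspan (insert f G)" unfolding g_def using sf sub fin by (intro cspan_diff) auto
  then have s': "s + k *\<^sub>C g \<in> cspan (insert f G)" using s sub fin by (intro cspan_add cspan_scaleC) auto
  have w'G: "w - k *\<^sub>C g \<in> orth G" using sf s
    by (auto simp: orth_def cinner_diff_right cinner_scaleC_right g_def w_def)
  have "cinner g (w - k *\<^sub>C g) = 0"
    by (cases "g = 0") (simp_all add: k_def cinner_diff_right cinner_scaleC_right)
  moreover have "cinner sf (w - k *\<^sub>C g) = 0"
    using cinner_cspan_orth[OF sf(1) w'G] cinner_eq_zero_sym by blast
  moreover have "f = sf + g" by (simp add: g_def)
  ultimately have "cinner f (w - k *\<^sub>C g) = 0" by (simp add: cinner_add_left)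
  with w'G have "w - k *\<^sub>C g \<in> orth (insert f G)" by (auto simp: orth_def)
  moreover have "v - (s + k *\<^sub>C g) = w - k *\<^sub>C g" by (simp add: w_def)
  ultimately show ?case using s' by metis
qed

lemma orth_orth_finite:
  assumes "finite F"
  shows "orth (orth F) = cspan (F::'a::complex_inner set)"
proof (intro set_eqI iffI)
  fix v assume v: "v \<in> orth (orth F)"
  obtain s where s: "s \<in> cspan F" "v - s \<in> orth F" using cspan_orth_decomposition[OF assms] by blast
  have "cinner (v - s) v = 0" using v s(2) by (simp add: orth_def)
  moreover have "cinner (v - s) s = 0" using cinner_cspan_orth[OF s] .
  ultimately have "cinner (v - s) (v - s) = 0" by (simp add: cinner_diff_right)
  then show "v \<in> cspan F" using s(1) by simp
next
  fix s assume "s \<in> cspan F"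
  then show "s \<in> orth (orth F)" using cinner_cspan_orth by (auto simp: orth_def)
qed

lemma closed_orth: "closed (orth (F::'a::complex_inner set))"
proof -
  have "orth F = (\<Inter>f\<in>F. {v. inner f v = 0} \<inter> {v. inner (\<i> *\<^sub>C f) v = 0})"
    by (auto simp: orth_def cinner_eq_zero_iff_inner)
  then show ?thesis by (simp add: closed_INT closed_Int closed_hyperplane)
qed

lemma orth_in_closed_subspaces: "orth F \<in> closed_subspaces"
  using closed_orth
  by (auto simp: closed_subspaces_def csubspace_def orth_def cinner_add_right cinner_scaleC_right)

lemma cspan_in_closed_subspaces: "finite F \<Longrightarrow> cspan F \<in> closed_subspaces"
  using orth_in_closed_subspaces by (metis orth_orth_finite)

lemma cspan_singleton_in_closed_subspaces: "cspan {x} \<in> closed_subspaces"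
  by (simp add: cspan_in_closed_subspaces)

lemma closed_subspace_zero: "a \<in> closed_subspaces \<Longrightarrow> 0 \<in> a"
  by (simp add: closed_subspaces_def csubspace_def)

lemma closed_subspace_add: "a \<in> closed_subspaces \<Longrightarrow> x \<in> a \<Longrightarrow> y \<in> a \<Longrightarrow> x + y \<in> a"
  by (simp add: closed_subspaces_def csubspace_def)

lemma closed_subspace_scaleC: "a \<in> closed_subspaces \<Longrightarrow> x \<in> a \<Longrightarrow> c *\<^sub>C x \<in> a"
  by (simp add: closed_subspaces_def csubspace_def)

lemma closed_subspace_scaleR: "a \<in> closed_subspaces \<Longrightarrow> x \<in> a \<Longrightarrow> c *\<^sub>R x \<in> a"
  by (metis closed_subspace_scaleC scaleC_of_real)

lemma closed_subspace_diff: "a \<in> closed_subspaces \<Longrightarrow> x \<in> a \<Longrightarrow> y \<in> a \<Longrightarrow> x - y \<in> a"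
  by (metis closed_subspace_add closed_subspace_scaleR diff_conv_add_uminus scaleR_minus1_left)

lemma closed_subspaces_Int: "a \<in> closed_subspaces \<Longrightarrow> b \<in> closed_subspaces \<Longrightarrow> a \<inter> b \<in> closed_subspaces"
  by (auto simp: closed_subspaces_def csubspace_def)

lemma UNIV_in_closed_subspaces: "UNIV \<in> closed_subspaces"
  by (auto simp: closed_subspaces_def csubspace_def)

lemma cspan_singleton_subset: "a \<in> closed_subspaces \<Longrightarrow> x \<in> a \<Longrightarrow> cspan {x} \<subseteq> a"
  by (auto simp: cspan_singleton closed_subspace_scaleC)

lemma closed_subspace_nonzero: "a \<in> closed_subspaces \<Longrightarrow> a \<noteq> {0} \<Longrightarrow> \<exists>v\<in>a. v \<noteq> 0"
  using closed_subspace_zero by blast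

lemma cspan_singleton_atom:
  assumes "x \<noteq> 0" "d \<in> closed_subspaces" "d \<subseteq> cspan {x::'a::complex_inner}" "d \<noteq> {0}"
  shows "cspan {x} \<subseteq> d"
proof -
  obtain v where v: "v \<in> d" "v \<noteq> 0" using closed_subspace_nonzero assms by blast
  then obtain c where c: "v = c *\<^sub>C x" using assms by (auto simp: cspan_singleton)
  moreover have "c \<noteq> 0" using c v by auto
  ultimately have "x = inverse c *\<^sub>C v" by (simp add: scaleC_scaleC scaleC_one)
  then have "x \<in> d" using v assms closed_subspace_scaleC by metis
  then show ?thesis using assms cspan_singleton_subset by blast
qed

section \<open>Quasipoints of lattices of sets\<close>

lemma quasipoint_pre: "B \<in> quasipoints L le meet Z \<Longrightarrow> is_quasipoint_pre L le meet Z B"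
  by (simp add: quasipoints_def)

lemma quasipoint_insert:
  "B \<in> quasipoints L le meet Z \<Longrightarrow> is_quasipoint_pre L le meet Z (insert a B) \<Longrightarrow> a \<in> B"
  unfolding quasipoints_def by blast

lemma quasipoint_lower_bound:
  assumes B: "B \<in> quasipoints L (\<subseteq>) (\<inter>) Z"
    and "a \<in> L" "a \<noteq> Z" "\<And>b. b \<in> B \<Longrightarrow> a \<subseteq> b"
  shows "a \<in> B"
proof (rule quasipoint_insert[OF B])
  show "is_quasipoint_pre L (\<subseteq>) (\<inter>) Z (insert a B)"
    using quasipoint_pre[OF B] assms(2-4) unfolding is_quasipoint_pre_def by blast
qed

lemma quasipoint_upward_closed:
  assumes B: "B \<in> quasipoints L (\<subseteq>) (\<inter>) Z"
    and "c \<in> B" "d \<in> L" "c \<subseteq> d" "d \<noteq> Z"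
  shows "d \<in> B"
proof (rule quasipoint_insert[OF B])
  have pre: "is_quasipoint_pre L (\<subseteq>) (\<inter>) Z B" using quasipoint_pre[OF B] .
  have below: "\<exists>e\<in>B. e \<subseteq> p" if "p \<in> insert d B" for p
    using that assms(2,4) by blast
  show "is_quasipoint_pre L (\<subseteq>) (\<inter>) Z (insert d B)"
    unfolding is_quasipoint_pre_def
  proof (intro conjI ballI)
    show "insert d B \<subseteq> L" "insert d B \<noteq> {}" "Z \<notin> insert d B"
      using pre assms(3,5) unfolding is_quasipoint_pre_def by auto
    fix p q assume "p \<in> insert d B" "q \<in> insert d B"
    then obtain p' q' where "p' \<in> B" "p' \<subseteq> p" "q' \<in> B" "q' \<subseteq> q" using below by meson
    moreover obtain e where "e \<in> B" "e \<subseteq> p' \<inter> q'"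
      using pre \<open>p' \<in> B\<close> \<open>q' \<in> B\<close> unfolding is_quasipoint_pre_def by blast
    ultimately have "e \<subseteq> p \<inter> q" by (meson Int_mono order_trans)
    then show "\<exists>e\<in>insert d B. e \<subseteq> p \<inter> q" using \<open>e \<in> B\<close> by blast
  qed
qed
lemma principal_quasipoint:
  assumes "r \<in> L" "\<not> r \<subseteq> Z"
    and atom: "\<And>d. d \<in> L \<Longrightarrow> d \<noteq> Z \<Longrightarrow> d \<subseteq> r \<Longrightarrow> r \<subseteq> d"
  shows "{c \<in> L. r \<subseteq> c} \<in> quasipoints L (\<subseteq>) (\<inter>) Z"
  unfolding quasipoints_def
proof (intro CollectI conjI allI impI)
  let ?P = "{c \<in> L. r \<subseteq> c}"
  show "is_quasipoint_pre L (\<subseteq>) (\<inter>) Z ?P"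
    unfolding is_quasipoint_pre_def
  proof (intro conjI ballI)
    show "?P \<subseteq> L" "?P \<noteq> {}" "Z \<notin> ?P" using assms(1,2) by blast+
    fix a b assume "a \<in> ?P" "b \<in> ?P"
    then show "\<exists>c\<in>?P. c \<subseteq> a \<inter> b" using assms(1) by (intro bexI[of _ r]) auto
  qed
  fix B assume B: "is_quasipoint_pre L (\<subseteq>) (\<inter>) Z B \<and> ?P \<subseteq> B"
  have "r \<in> B" using B assms(1) by blast
  have "c \<in> ?P" if "c \<in> B" for c
  proof -
    obtain e where e: "e \<in> B" "e \<subseteq> c \<inter> r"
      using B \<open>r \<in> B\<close> \<open>c \<in> B\<close> unfolding is_quasipoint_pre_def by blast
    then have "e \<in> L" "e \<noteq> Z" using B unfolding is_quasipoint_pre_def by auto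
    then have "r \<subseteq> e" using atom e(2) by blast
    moreover have "c \<in> L" using B \<open>c \<in> B\<close> unfolding is_quasipoint_pre_def by blast
    ultimately show ?thesis using e(2) by blast
  qed
  then show "B = ?P" using B by blast
qed

lemma quasipoint_exists_above:
  assumes B0: "is_quasipoint_pre L le meet Z B0"
  shows "\<exists>B\<in>quasipoints L le meet Z. B0 \<subseteq> B"
proof -
  define A where "A = {B. is_quasipoint_pre L le meet Z B \<and> B0 \<subseteq> B}"
  have "\<Union>C \<in> A" if "C \<noteq> {}" "subset.chain A C" for C
  proof -
    have CA: "C \<subseteq> A" and chain: "\<And>X Y. X \<in> C \<Longrightarrow> Y \<in> C \<Longrightarrow> X \<subseteq> Y \<or> Y \<subseteq> X"
      using that(2) by (auto simp: subset_chain_def)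
    have pre: "is_quasipoint_pre L le meet Z X" if "X \<in> C" for X
      using CA that by (simp add: A_def subset_iff)
    have "B0 \<subseteq> \<Union>C" using CA that(1) by (auto simp: A_def)
    moreover have "\<Union>C \<noteq> {}" using \<open>B0 \<subseteq> \<Union>C\<close> B0 unfolding is_quasipoint_pre_def by blast
    moreover have "\<exists>c\<in>\<Union>C. le c (meet p q)" if "p \<in> X" "q \<in> Y" "X \<in> C" "Y \<in> C" for p q X Y
    proof (cases "X \<subseteq> Y")
      case True
      then show ?thesis using pre[OF that(4)] that unfolding is_quasipoint_pre_def by blast
    next
      case False
      then have "Y \<subseteq> X" using chain[OF that(3,4)] by blast
      then show ?thesis using pre[OF that(3)] that unfolding is_quasipoint_pre_def by blast
    qed
    moreover have "\<Union>C \<subseteq> L" "Z \<notin> \<Union>C" using pre unfolding is_quasipoint_pre_def by blast+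
    ultimately show ?thesis unfolding A_def is_quasipoint_pre_def by blast
  qed
  moreover have "A \<noteq> {}" using B0 by (auto simp: A_def)
  ultimately obtain M where M: "M \<in> A" "\<forall>X\<in>A. M \<subseteq> X \<longrightarrow> X = M"
    using subset_Zorn_nonempty[of A] by blast
  then have "M \<in> quasipoints L le meet Z" unfolding quasipoints_def by (auto simp: A_def)
  then show ?thesis using M(1) by (auto simp: A_def)
qed

section \<open>The Stone spectrum of \<open>L(H)\<close>\<close>

abbreviation quasipoints_LH :: "'a::complex_inner set set set" where
  "quasipoints_LH \<equiv> quasipoints closed_subspaces (\<subseteq>) (\<inter>) {0}"

abbreviation Q_LH :: "'a::complex_inner set \<Rightarrow> 'a set set set" where
  "Q_LH a \<equiv> {B \<in> quasipoints_LH. a \<in> B}"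

lemma quasipoint_LH_member:
  assumes "B \<in> quasipoints_LH" "c \<in> B"
  shows "c \<in> closed_subspaces" "c \<noteq> {0}"
  using quasipoint_pre[OF assms(1)] assms(2) unfolding is_quasipoint_pre_def by auto

lemma quasipoint_LH_upward_closed:
  assumes "B \<in> quasipoints_LH" "c \<in> B" "d \<in> closed_subspaces" "c \<subseteq> d"
  shows "d \<in> B"
proof (rule quasipoint_upward_closed[OF assms])
  obtain v where "v \<in> c" "v \<noteq> 0"
    using quasipoint_LH_member[OF assms(1,2)] closed_subspace_nonzero by blast
  then show "d \<noteq> {0}" using assms(4) by blast
qed

lemma quasipoint_LH_Int:
  assumes "B \<in> quasipoints_LH" "a \<in> B" "b \<in> B"
  shows "a \<inter> b \<in> B"
proof -
  obtain c where "c \<in> B" "c \<subseteq> a \<inter> b"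
    using quasipoint_pre[OF assms(1)] assms(2,3) unfolding is_quasipoint_pre_def by blast
  moreover have "a \<inter> b \<in> closed_subspaces"
    using quasipoint_LH_member(1)[OF assms(1)] assms(2,3) closed_subspaces_Int by blast
  ultimately show ?thesis using quasipoint_LH_upward_closed[OF assms(1)] by blast
qed

lemma UNIV_in_quasipoint_LH:
  assumes "B \<in> quasipoints_LH"
  shows "UNIV \<in> B"
proof -
  obtain c where "c \<in> B" using quasipoint_pre[OF assms] unfolding is_quasipoint_pre_def by blast
  then show ?thesis
    using quasipoint_LH_upward_closed[OF assms _ UNIV_in_closed_subspaces] by blast
qed

lemma principal_quasipoint_LH:
  assumes "x \<noteq> 0"
  shows "{c \<in> closed_subspaces. cspan {x::'a::complex_inner} \<subseteq> c} \<in> quasipoints_LH"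
proof (rule principal_quasipoint[where L = closed_subspaces and Z = "{0}" and r = "cspan {x}"])
  show "cspan {x} \<in> closed_subspaces" by (rule cspan_singleton_in_closed_subspaces)
  show "\<not> cspan {x} \<subseteq> {0}" using assms cspan_superset[of x "{x}"] by blast
  show "cspan {x} \<subseteq> d" if "d \<in> closed_subspaces" "d \<noteq> {0}" "d \<subseteq> cspan {x}" for d
    using cspan_singleton_atom assms that by blast
qed

lemma quasipoint_LH_separates:
  assumes B: "B \<in> quasipoints_LH" and "x \<noteq> 0" "y \<notin> cspan {x::'a::complex_inner}"
  shows "\<exists>b\<in>B. \<not> (x \<in> b \<and> y \<in> b)"
proof (rule ccontr)
  assume contains: "\<not> (\<exists>b\<in>B. \<not> (x \<in> b \<and> y \<in> b))"
  then have "cspan {x} \<subseteq> b" if "b \<in> B" for b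
    using that cspan_singleton_subset quasipoint_LH_member(1)[OF B] by blast
  moreover have "cspan {x} \<noteq> {0}" using assms(2) cspan_superset[of x "{x}"] by blast
  ultimately have "cspan {x} \<in> B"
    using quasipoint_lower_bound[OF B cspan_singleton_in_closed_subspaces] by blast
  then show False using contains assms(3) by blast
qed

lemma quasipoints_LH_separating_cover:
  assumes "x \<noteq> 0" "y \<notin> cspan {x::'a::complex_inner}"
  shows "quasipoints_LH \<subseteq> \<Union> {Q_LH b | b. b \<in> closed_subspaces \<and> \<not> (x \<in> b \<and> y \<in> b)}"
proof
  fix B :: "'a set set" assume B: "B \<in> quasipoints_LH"
  then obtain b where b: "b \<in> B" "\<not> (x \<in> b \<and> y \<in> b)"
    using quasipoint_LH_separates assms by blast
  then have "b \<in> closed_subspaces" using quasipoint_LH_member(1)[OF B] by blast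
  moreover have "B \<in> Q_LH b" using B b(1) by simp
  ultimately show "B \<in> \<Union> {Q_LH b | b. b \<in> closed_subspaces \<and> \<not> (x \<in> b \<and> y \<in> b)}"
    using b(2) by blast
qed

lemma stone_spectrum_LH_eq:
  "stone_spectrum_LH TYPE('a::complex_inner) = topology_generated_by (Q_LH ` (closed_subspaces :: 'a set set))"
  by (simp add: stone_spectrum_LH_def stone_spectrum_def)

lemma topspace_stone_spectrum_LH:
  "topspace (stone_spectrum_LH TYPE('a::complex_inner)) = (quasipoints_LH :: 'a set set set)"
proof -
  have "\<Union> (Q_LH ` closed_subspaces) = (quasipoints_LH :: 'a set set set)"
  proof (intro equalityI subsetI)
    fix B :: "'a set set" assume "B \<in> quasipoints_LH"
    then have "B \<in> Q_LH UNIV" using UNIV_in_quasipoint_LH by blast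
    then show "B \<in> \<Union> (Q_LH ` closed_subspaces)" using UNIV_in_closed_subspaces by blast
  qed blast
  then show ?thesis by (simp add: stone_spectrum_LH_eq)
qed

lemma openin_Q_LH:
  "a \<in> closed_subspaces \<Longrightarrow> openin (stone_spectrum_LH TYPE('a::complex_inner)) (Q_LH (a::'a set))"
  unfolding stone_spectrum_LH_eq by (rule topology_generated_by_Basis) simp

lemma generate_topology_on_local_base:
  assumes "generate_topology_on S U" "x \<in> U"
    and directed: "\<And>s t. s \<in> S \<Longrightarrow> t \<in> S \<Longrightarrow> x \<in> s \<Longrightarrow> x \<in> t \<Longrightarrow> \<exists>r\<in>S. x \<in> r \<and> r \<subseteq> s \<inter> t"
  shows "\<exists>s\<in>S. x \<in> s \<and> s \<subseteq> U"
  using assms(1,2)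
proof (induction rule: generate_topology_on.induct)
  case Empty
  then show ?case by simp
next
  case (Int a b)
  obtain s where s: "s \<in> S" "x \<in> s" "s \<subseteq> a" using Int.IH(1) Int.prems by blast
  obtain t where t: "t \<in> S" "x \<in> t" "t \<subseteq> b" using Int.IH(2) Int.prems by blast
  obtain r where "r \<in> S" "x \<in> r" "r \<subseteq> s \<inter> t" using directed[OF s(1) t(1) s(2) t(2)] by blast
  then show ?case using s(3) t(3) by blast
next
  case (UN K)
  then obtain k where "k \<in> K" "x \<in> k" by blast
  then obtain s where "s \<in> S" "x \<in> s" "s \<subseteq> k" using UN.IH by blast
  then show ?case using \<open>k \<in> K\<close> by blast
next
  case (Basis s)
  then show ?case by blast
qed

lemma stone_spectrum_LH_local_base:
  assumes "openin (stone_spectrum_LH TYPE('a::complex_inner)) U" "B \<in> U"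
  shows "\<exists>a\<in>closed_subspaces. B \<in> Q_LH (a::'a set) \<and> Q_LH a \<subseteq> U"
proof -
  have directed: "\<exists>r\<in>Q_LH ` closed_subspaces. B \<in> r \<and> r \<subseteq> s \<inter> t"
    if st: "s \<in> Q_LH ` closed_subspaces" "t \<in> Q_LH ` closed_subspaces" "B \<in> s" "B \<in> t" for s t
  proof -
    obtain a b where ab: "a \<in> closed_subspaces" "s = Q_LH a" "b \<in> closed_subspaces" "t = Q_LH b"
      using st(1,2) by blast
    have "B \<in> Q_LH (a \<inter> b)" using st(3,4) ab quasipoint_LH_Int by auto
    moreover have "Q_LH (a \<inter> b) \<subseteq> s \<inter> t"
    proof
      fix C assume C: "C \<in> Q_LH (a \<inter> b)"
      then have "a \<in> C" "b \<in> C" using ab(1,3) quasipoint_LH_upward_closed[of C "a \<inter> b"] by auto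
      then show "C \<in> s \<inter> t" using C ab(2,4) by simp
    qed
    moreover have "Q_LH (a \<inter> b) \<in> Q_LH ` closed_subspaces" using ab closed_subspaces_Int by blast
    ultimately show ?thesis by blast
  qed
  obtain r where "r \<in> Q_LH ` closed_subspaces" "B \<in> r" "r \<subseteq> U"
    using generate_topology_on_local_base[OF _ assms(2) directed] assms(1)
    unfolding stone_spectrum_LH_eq openin_topology_generated_by_iff by blast
  then show ?thesis by blast
qed

section \<open>Non-compactness\<close>

lemma closed_subspace_two_points_on_line:
  assumes a: "a \<in> closed_subspaces" and "x + s *\<^sub>R y \<in> a" "x + t *\<^sub>R y \<in> a" "s \<noteq> t"
  shows "x \<in> a \<and> y \<in> a"
proof
  have "(s - t) *\<^sub>R y \<in> a"
    using closed_subspace_diff[OF a assms(2,3)] by (simp add: algebra_simps)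
  then have "inverse (s - t) *\<^sub>R ((s - t) *\<^sub>R y) \<in> a" by (rule closed_subspace_scaleR[OF a])
  then show "y \<in> a" using assms(4) by simp
  then show "x \<in> a"
    using closed_subspace_diff[OF a assms(2) closed_subspace_scaleR[OF a, of y s]] by simp
qed

lemma line_point_nonzero:
  assumes "x \<noteq> 0" "y \<notin> cspan {x::'a::complex_inner}"
  shows "x + t *\<^sub>R y \<noteq> 0"
proof
  assume line: "x + t *\<^sub>R y = 0"
  show False
  proof (cases "t = 0")
    case True
    then show False using line assms(1) by simp
  next
    case False
    have "t *\<^sub>R y = - x" using line by (simp add: eq_neg_iff_add_eq_0 add.commute)
    have "y = inverse t *\<^sub>R (t *\<^sub>R y)" using False by simp
    also have "\<dots> = (- inverse t) *\<^sub>R x" by (simp add: \<open>t *\<^sub>R y = - x\<close>)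
    also have "\<dots> = complex_of_real (- inverse t) *\<^sub>C x" by (rule scaleC_of_real[symmetric])
    finally show False using assms(2) by (simp add: cspan_singleton)
  qed
qed

lemma Q_LH_not_within_compact:
  fixes x y :: "'a::complex_inner"
  assumes a: "a \<in> closed_subspaces" "x \<in> a" "y \<in> a" and "x \<noteq> 0" "y \<notin> cspan {x}"
    and K: "compactin (stone_spectrum_LH TYPE('a)) K"
  shows "\<not> Q_LH a \<subseteq> K"
proof
  assume sub: "Q_LH a \<subseteq> K"
  define P where "P n = {c \<in> closed_subspaces. cspan {x + real n *\<^sub>R y} \<subseteq> c}" for n :: nat
  have P: "P n \<in> Q_LH a" for n
  proof -
    have "x + real n *\<^sub>R y \<in> a"
      using a by (intro closed_subspace_add closed_subspace_scaleR)
    then have "a \<in> P n" using cspan_singleton_subset a(1) by (simp add: P_def)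
    then show ?thesis
      using principal_quasipoint_LH[OF line_point_nonzero[OF assms(4,5)]] by (simp add: P_def)
  qed
  define \<U> where "\<U> = {Q_LH b | b. b \<in> closed_subspaces \<and> \<not> (x \<in> b \<and> y \<in> b)}"
  have "K \<subseteq> \<Union>\<U>"
    using compactin_subset_topspace[OF K] quasipoints_LH_separating_cover[OF assms(4,5)]
    unfolding topspace_stone_spectrum_LH \<U>_def by blast
  moreover have "openin (stone_spectrum_LH TYPE('a)) S" if "S \<in> \<U>" for S
    using that openin_Q_LH unfolding \<U>_def by blast
  ultimately obtain \<F> where \<F>: "finite \<F>" "\<F> \<subseteq> \<U>" "K \<subseteq> \<Union>\<F>"
    using K unfolding compactin_def by meson
  have "\<forall>n. \<exists>S. S \<in> \<F> \<and> P n \<in> S" using P sub \<F>(3) by blast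
  then obtain f where f: "\<forall>n. f n \<in> \<F> \<and> P n \<in> f n" by metis
  have "inj f"
  proof (rule injI)
    fix n m assume "f n = f m"
    have "f n \<in> \<U>" using f \<F>(2) by blast
    then obtain b where b: "b \<in> closed_subspaces" "\<not> (x \<in> b \<and> y \<in> b)" "f n = Q_LH b"
      unfolding \<U>_def by blast
    then have "P n \<in> Q_LH b" "P m \<in> Q_LH b" using f \<open>f n = f m\<close> by metis+
    then have "x + real n *\<^sub>R y \<in> b" "x + real m *\<^sub>R y \<in> b"
      using cspan_superset[OF singletonI] by (auto simp: P_def)
    from closed_subspace_two_points_on_line[OF b(1) this] show "n = m" using b(2) by auto
  qed
  moreover have "finite (range f)" using f \<F>(1) by (meson finite_subset image_subsetI)
  ultimately show False using finite_imageD infinite_UNIV_nat by blast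
qed

lemma orth_finite_neq_zero:
  assumes "cinfinite_dim TYPE('a::complex_inner)" "finite (F::'a set)"
  shows "orth F \<noteq> {0}"
proof
  assume "orth F = {0}"
  then have "cspan F = UNIV" using orth_orth_finite[OF assms(2)] by simp
  then show False using assms unfolding cinfinite_dim_def by blast
qed

lemma finite_orths_quasipoint_pre:
  assumes "cinfinite_dim TYPE('a::complex_inner)"
  shows "is_quasipoint_pre closed_subspaces (\<subseteq>) (\<inter>) {0} {orth F | F. finite (F::'a set)}"
  unfolding is_quasipoint_pre_def
proof (intro conjI ballI)
  show "{orth F | F. finite (F::'a set)} \<subseteq> closed_subspaces" using orth_in_closed_subspaces by blast
  show "{orth F | F. finite (F::'a set)} \<noteq> {}" by blast
  show "{0} \<notin> {orth F | F. finite (F::'a set)}" using orth_finite_neq_zero[OF assms] by fastforce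
  fix p q assume "p \<in> {orth F | F. finite (F::'a set)}" "q \<in> {orth F | F. finite (F::'a set)}"
  then obtain F G where "p = orth F" "q = orth G" "finite F" "finite G" by blast
  then have "orth (F \<union> G) = p \<inter> q" "finite (F \<union> G)" by (auto simp: orth_def)
  then show "\<exists>c\<in>{orth F | F. finite (F::'a set)}. c \<subseteq> p \<inter> q" by blast
qed

lemma finite_orths_quasipoint_member_not_in_line:
  assumes M: "M \<in> quasipoints_LH" "{orth F | F. finite F} \<subseteq> M" and "a \<in> M"
  shows "\<exists>x\<in>a. \<exists>y\<in>a. x \<noteq> 0 \<and> y \<notin> cspan {x::'a::complex_inner}"
proof (rule ccontr)
  assume in_line: "\<not> (\<exists>x\<in>a. \<exists>y\<in>a. x \<noteq> 0 \<and> y \<notin> cspan {x})"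
  obtain v where v: "v \<in> a" "v \<noteq> 0"
    using quasipoint_LH_member[OF M(1) \<open>a \<in> M\<close>] closed_subspace_nonzero by blast
  have "orth {v} \<in> M" using M(2) by blast
  then have "a \<inter> orth {v} \<in> M" using quasipoint_LH_Int[OF M(1) \<open>a \<in> M\<close>] by blast
  moreover have "a \<inter> orth {v} \<subseteq> {0}"
  proof
    fix w assume w: "w \<in> a \<inter> orth {v}"
    then obtain c where c: "w = c *\<^sub>C v" using in_line v by (auto simp: cspan_singleton)
    have "c * cinner v v = 0" using w by (simp add: c orth_def cinner_scaleC_right)
    then show "w \<in> {0}" using c v(2) by simp
  qed
  ultimately show False
    using quasipoint_LH_member[OF M(1)] closed_subspace_zero by blast
qed

theorem proposition3p51:
  assumes "cdim_gt_one TYPE('a::chilbert_space)"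
  shows "\<not> compact_space (stone_spectrum_LH TYPE('a)) \<and>
         (cinfinite_dim TYPE('a) \<longrightarrow> \<not> locally_compact_space (stone_spectrum_LH TYPE('a)))"
proof
  let ?X = "stone_spectrum_LH TYPE('a)"
  obtain x :: 'a where "x \<notin> cspan {0}" using assms unfolding cdim_gt_one_def by blast
  then have "x \<noteq> 0" using cspan_superset[OF singletonI] by blast
  obtain y :: 'a where "y \<notin> cspan {x}" using assms unfolding cdim_gt_one_def by blast
  show "\<not> compact_space ?X"
  proof
    assume "compact_space ?X"
    then have "compactin ?X (topspace ?X)" by (simp add: compact_space_def)
    moreover have "Q_LH UNIV \<subseteq> topspace ?X" by (simp add: topspace_stone_spectrum_LH)
    ultimately show False
      using Q_LH_not_within_compact[OF UNIV_in_closed_subspaces UNIV_I UNIV_I \<open>x \<noteq> 0\<close> \<open>y \<notin> cspan {x}\<close>]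
      by blast
  qed
  show "cinfinite_dim TYPE('a) \<longrightarrow> \<not> locally_compact_space ?X"
  proof (intro impI notI)
    assume "cinfinite_dim TYPE('a)" and "locally_compact_space ?X"
    obtain M :: "'a set set" where M: "M \<in> quasipoints_LH" "{orth F | F. finite F} \<subseteq> M"
      using quasipoint_exists_above[OF finite_orths_quasipoint_pre[OF \<open>cinfinite_dim TYPE('a)\<close>]]
      by blast
    have "\<exists>U K. openin ?X U \<and> compactin ?X K \<and> M \<in> U \<and> U \<subseteq> K"
      using \<open>locally_compact_space ?X\<close> M(1)
      unfolding locally_compact_space_def topspace_stone_spectrum_LH by blast
    then obtain U K where U: "openin ?X U" "M \<in> U" "U \<subseteq> K" and K: "compactin ?X K"
      by blast
    obtain a where a: "a \<in> closed_subspaces" "M \<in> Q_LH a" "Q_LH a \<subseteq> U"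
      using stone_spectrum_LH_local_base[OF U(1,2)] by blast
    then obtain v w where "v \<in> a" "w \<in> a" "v \<noteq> 0" "w \<notin> cspan {v}"
      using finite_orths_quasipoint_member_not_in_line[OF M] by blast
    then show False
      using Q_LH_not_within_compact[OF a(1) _ _ _ _ K] a(3) U(3) by blast
  qed
qed

end
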